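(* Let $s\ge 0$ and $n\ge 0$. The $R/\mathfrak{h}_s$-module $\mathcal{P}_{s,n}$ admits a filtration by $R/\mathfrak{h}_s$-submodules $0=F_0\subset F_1\subset\cdots\subset F_{(s+1)^n}=\mathcal{P}_{s,n}$ such that $F_i/F_{i-1}\cong \mathcal{Q}_{s,n}$ for each $1\le i\le (s+1)^n$.
   Context: Let $k$ be a field. Let $\mathfrak{S}=\bigcup_{n\ge1}\mathfrak{S}_n$ be the group of finitary permutations of $\{1,2,\dots\}$ and $\mathfrak{S}(n)$ the subgroup fixing $1,\dots,n$; a representation of $\mathfrak{S}$ is smooth if every vector is fixed by some $\mathfrak{S}(n)$. Let $R=k[x_1,x_2,\dots]$ with $\mathfrak{S}$ permuting the variables, and $\mathfrak{h}_s$ the ideal generated by all $x_i^{s+1}$. An $R/\mathfrak{h}_s$-module means a module over $R/\mathfrak{h}_s$ equipped with a smooth $\mathfrak{S}$-action compatible with the action on $R/\mathfrak{h}_s$ ($\sigma(am)=\sigma(a)\sigma(m)$); submodules and isomorphisms are required to be $\mathfrak{S}$-equivariant. $\mathcal{P}_{s,n}$ is the free $R/\mathfrak{h}_s$-module with basis $e_{i_1,\dots,i_n}$ indexed by $n$-tuples of distinct positive integers, with $\sigma e_{i_1,\dots,i_n}=e_{\sigma(i_1),\dots,\sigma(i_n)}$. $\mathcal{Q}_{s,n}$ is the quotient of $\mathcal{P}_{s,n}$ by the submodule generated by all $x_i e_{i_1,\dots,i_n}$ with $i\in\{i_1,\dots,i_n\}$. *)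

theory Defs
  imports Main
begin

text \<open>A k-basis of R/h_s is given by monomials x^alpha with
alpha : positive integers -> nat finitely supported and alpha i <= s.
P_{s,n} is free over R/h_s with basis e_t, t an n-tuple of distinct positive
integers, so a k-basis of P_{s,n} is the set of pairs (alpha, t).
Elements of P_{s,n} are finitely supported coefficient functions on such pairs.
Index 0 is not a variable (variables are x_1, x_2, ...).\<close>

type_synonym 'k vec = "((nat \<Rightarrow> nat) \<times> nat list) \<Rightarrow> 'k"

definition valid_mono :: "nat \<Rightarrow> (nat \<Rightarrow> nat) \<Rightarrow> bool" where
  "valid_mono s \<alpha> \<longleftrightarrow> \<alpha> 0 = 0 \<and> finite {i. \<alpha> i \<noteq> 0} \<and> (\<forall>i. \<alpha> i \<le> s)"

definition valid_tuple :: "nat \<Rightarrow> nat list \<Rightarrow> bool" where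
  "valid_tuple n t \<longleftrightarrow> length t = n \<and> distinct t \<and> 0 \<notin> set t"

definition Pcarrier :: "nat \<Rightarrow> nat \<Rightarrow> ('k::zero) vec set" where
  "Pcarrier s n = {v. finite {p. v p \<noteq> 0} \<and>
      (\<forall>\<alpha> t. v (\<alpha>, t) \<noteq> 0 \<longrightarrow> valid_mono s \<alpha> \<and> valid_tuple n t)}"

text \<open>Multiplication by the variable x_j (j >= 1) on P_{s,n}; uses x_j^(s+1) = 0.\<close>
definition xmul :: "nat \<Rightarrow> nat \<Rightarrow> ('k::zero) vec \<Rightarrow> 'k vec" where
  "xmul s j v = (\<lambda>(\<alpha>, t). if 1 \<le> \<alpha> j \<and> \<alpha> j \<le> s then v (\<alpha>(j := \<alpha> j - 1), t) else 0)"

definition finperm :: "(nat \<Rightarrow> nat) \<Rightarrow> bool" where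
  "finperm \<sigma> \<longleftrightarrow> bij \<sigma> \<and> \<sigma> 0 = 0 \<and> finite {i. \<sigma> i \<noteq> i}"

text \<open>Action: sigma (c x^alpha e_t) = c x^(alpha o sigma^-1) e_(sigma t).\<close>
definition pact :: "(nat \<Rightarrow> nat) \<Rightarrow> 'k vec \<Rightarrow> 'k vec" where
  "pact \<sigma> v = (\<lambda>(\<beta>, u). v (\<beta> \<circ> \<sigma>, map (inv \<sigma>) u))"

text \<open>(S-equivariant) R/h_s-submodules of P_{s,n}: k-subspaces stable under all x_j
and all finitary permutations.  (Smoothness is automatic inside P_{s,n}.)\<close>
definition is_submod :: "nat \<Rightarrow> nat \<Rightarrow> ('k::field) vec set \<Rightarrow> bool" where
  "is_submod s n M \<longleftrightarrow> M \<subseteq> Pcarrier s n \<and> (\<lambda>_. 0) \<in> M \<and>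
     (\<forall>v\<in>M. \<forall>w\<in>M. \<forall>a b::'k. (\<lambda>p. a * v p + b * w p) \<in> M) \<and>
     (\<forall>j\<ge>1. \<forall>v\<in>M. xmul s j v \<in> M) \<and>
     (\<forall>\<sigma>. finperm \<sigma> \<longrightarrow> (\<forall>v\<in>M. pact \<sigma> v \<in> M))"

definition ebasis :: "(nat \<Rightarrow> nat) \<times> nat list \<Rightarrow> ('k::{zero,one}) vec" where
  "ebasis p = (\<lambda>q. if q = p then 1 else 0)"

definition Qgens :: "nat \<Rightarrow> nat \<Rightarrow> ('k::{zero,one}) vec set" where
  "Qgens s n = {xmul s i (ebasis ((\<lambda>_. 0), t)) | i t. valid_tuple n t \<and> i \<in> set t}"

text \<open>The submodule generated by the generators; Q_{s,n} = P_{s,n} / Nsub s n.\<close>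
definition Nsub :: "nat \<Rightarrow> nat \<Rightarrow> ('k::field) vec set" where
  "Nsub s n = \<Inter> {M. is_submod s n M \<and> Qgens s n \<subseteq> M}"

text \<open>A / B is isomorphic (as R/h_s-module with S-action) to Q_{s,n} = P_{s,n}/Nsub:
there is a map phi from A to P_{s,n} which, composed with the projection to
Q_{s,n}, is k-linear, x_j-linear, S-equivariant, surjective, with kernel B.\<close>
definition iso_to_Q :: "nat \<Rightarrow> nat \<Rightarrow> ('k::field) vec set \<Rightarrow> 'k vec set \<Rightarrow> bool" where
  "iso_to_Q s n A B \<longleftrightarrow> (\<exists>\<phi> :: 'k vec \<Rightarrow> 'k vec.
     (\<forall>v\<in>A. \<phi> v \<in> Pcarrier s n) \<and>
     (\<forall>v\<in>A. \<forall>w\<in>A. \<forall>a b::'k.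
        (\<lambda>p. \<phi> (\<lambda>q. a * v q + b * w q) p - (a * \<phi> v p + b * \<phi> w p)) \<in> Nsub s n) \<and>
     (\<forall>j\<ge>1. \<forall>v\<in>A. (\<lambda>p. \<phi> (xmul s j v) p - xmul s j (\<phi> v) p) \<in> Nsub s n) \<and>
     (\<forall>\<sigma>. finperm \<sigma> \<longrightarrow> (\<forall>v\<in>A. (\<lambda>p. \<phi> (pact \<sigma> v) p - pact \<sigma> (\<phi> v) p) \<in> Nsub s n)) \<and>
     (\<forall>u\<in>Pcarrier s n. \<exists>v\<in>A. (\<lambda>p. \<phi> v p - u p) \<in> Nsub s n) \<and>
     (\<forall>v\<in>A. \<phi> v \<in> Nsub s n \<longleftrightarrow> v \<in> B))"

end

theory Submission
  imports Defs
begin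

text \<open>Order the basis monomials x^\<alpha> e_t of P_{s,n} by the rank
\<Sum>_k (s - \<alpha>(t_k)) (s+1)^k < (s+1)^n, the number whose base-(s+1) digits are read off the
exponents of the variables of t. Multiplying by a variable can only lower the rank and permuting
the variables preserves it, so the spans F_i of the monomials of rank < i are submodules.
The monomials of rank exactly x are the x^\<beta> x_t^d e_t with \<beta> free of the variables of t
and d the exponent pattern determined by the digits of x. Sending such a monomial to x^\<beta> e_t
identifies F_{x+1} / F_x with P_{s,n} modulo the span of the monomials x^\<beta> e_t divisible by
a variable of t, and that span is exactly the submodule generated by the x_i e_t with i in t.\<close>

section \<open>Digit expansions\<close>

definition digit :: "nat \<Rightarrow> nat \<Rightarrow> nat \<Rightarrow> nat" where
  "digit b k x = x div b ^ k mod b"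

lemma sum_digits_less_power:
  fixes b :: nat
  assumes "\<forall>k<n. d k < b"
  shows "(\<Sum>k<n. d k * b ^ k) < b ^ n"
  using assms
proof (induction n)
  case 0
  then show ?case by simp
next
  case (Suc n)
  have "(\<Sum>k<Suc n. d k * b ^ k) < b ^ n + d n * b ^ n"
    using Suc by simp
  also have "\<dots> = (d n + 1) * b ^ n"
    by simp
  also have "\<dots> \<le> b * b ^ n"
    by (rule mult_right_mono) (use Suc.prems in \<open>auto simp: Suc_le_eq\<close>)
  also have "\<dots> = b ^ Suc n"
    by simp
  finally show ?case .
qed

lemma sum_digits_eq_mod: "(\<Sum>k<n. digit b k x * b ^ k) = x mod b ^ n"
proof (induction n)
  case 0
  then show ?case by simp
next
  case (Suc n)
  have "x mod b ^ Suc n = b ^ n * digit b n x + x mod b ^ n"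
    unfolding digit_def by (metis mod_mult2_eq mult.commute power_Suc2)
  with Suc show ?case by (simp add: algebra_simps)
qed

lemma digit_sum_digits:
  fixes b :: nat
  assumes "\<forall>k<n. d k < b" "j < n"
  shows "digit b j (\<Sum>k<n. d k * b ^ k) = d j"
  using assms
proof (induction n arbitrary: d j)
  case 0
  then show ?case by simp
next
  case (Suc n)
  have d0: "d 0 < b" using Suc.prems by auto
  have split: "(\<Sum>k<Suc n. d k * b ^ k) = d 0 + b * (\<Sum>k<n. d (Suc k) * b ^ k)"
    unfolding sum.lessThan_Suc_shift by (simp add: sum_distrib_left algebra_simps)
  show ?case
  proof (cases j)
    case 0
    then show ?thesis using split d0 by (simp add: digit_def)
  next
    case (Suc j')
    have "digit b j (\<Sum>k<Suc n. d k * b ^ k) = digit b j' (\<Sum>k<n. d (Suc k) * b ^ k)"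
      using split d0 Suc by (simp add: digit_def div_mult2_eq)
    also have "\<dots> = d j"
      using Suc.IH[of "\<lambda>k. d (Suc k)" j'] Suc.prems Suc by simp
    finally show ?thesis .
  qed
qed

lemma sum_digits_eq_iff:
  fixes b :: nat
  assumes "\<forall>k<n. d k < b" "x < b ^ n"
  shows "(\<Sum>k<n. d k * b ^ k) = x \<longleftrightarrow> (\<forall>k<n. d k = digit b k x)"
proof
  assume sum_eq: "(\<Sum>k<n. d k * b ^ k) = x"
  show "\<forall>k<n. d k = digit b k x"
    using digit_sum_digits[OF assms(1)] unfolding sum_eq by simp
next
  assume "\<forall>k<n. d k = digit b k x"
  then have "(\<Sum>k<n. d k * b ^ k) = (\<Sum>k<n. digit b k x * b ^ k)"
    by (intro sum.cong) auto
  also have "\<dots> = x"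
    using assms(2) by (simp add: sum_digits_eq_mod)
  finally show "(\<Sum>k<n. d k * b ^ k) = x" .
qed

section \<open>Ranks of exponent vectors along a tuple\<close>

definition tuple_rank :: "nat \<Rightarrow> nat list \<Rightarrow> (nat \<Rightarrow> nat) \<Rightarrow> nat" where
  "tuple_rank s t \<alpha> = (\<Sum>k<length t. (s - \<alpha> (t ! k)) * (s + 1) ^ k)"

definition digit_exponents :: "nat \<Rightarrow> nat \<Rightarrow> nat list \<Rightarrow> nat \<Rightarrow> nat" where
  "digit_exponents s x t j = (\<Sum>k<length t. if t ! k = j then s - digit (s + 1) k x else 0)"

definition lift_exponents :: "nat \<Rightarrow> nat \<Rightarrow> nat list \<Rightarrow> (nat \<Rightarrow> nat) \<Rightarrow> nat \<Rightarrow> nat" where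
  "lift_exponents s x t \<beta> j = \<beta> j + digit_exponents s x t j"

lemma tuple_rank_less_power: "tuple_rank s t \<alpha> < (s + 1) ^ length t"
  unfolding tuple_rank_def by (rule sum_digits_less_power) (simp add: less_Suc_eq_le)

lemma tuple_rank_map: "tuple_rank s (map f t) \<alpha> = tuple_rank s t (\<alpha> \<circ> f)"
  by (simp add: tuple_rank_def)

lemma tuple_rank_antimono:
  assumes "\<And>j. \<alpha> j \<le> \<alpha>' j"
  shows "tuple_rank s t \<alpha>' \<le> tuple_rank s t \<alpha>"
  unfolding tuple_rank_def
  by (rule sum_mono) (simp add: assms diff_le_mono2 mult_right_mono)

lemma tuple_rank_less_decr:
  assumes "j \<in> set t" "1 \<le> \<alpha> j" "\<alpha> j \<le> s"
  shows "tuple_rank s t \<alpha> < tuple_rank s t (\<alpha>(j := \<alpha> j - 1))"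
proof -
  obtain k where k: "k < length t" "t ! k = j"
    using assms(1) by (auto simp: in_set_conv_nth)
  show ?thesis
    unfolding tuple_rank_def
  proof (rule sum_strict_mono_ex1)
    show "\<forall>i\<in>{..<length t}. (s - \<alpha> (t ! i)) * (s + 1) ^ i
        \<le> (s - (\<alpha>(j := \<alpha> j - 1)) (t ! i)) * (s + 1) ^ i"
      by (auto intro: mult_right_mono)
    show "\<exists>i\<in>{..<length t}. (s - \<alpha> (t ! i)) * (s + 1) ^ i
        < (s - (\<alpha>(j := \<alpha> j - 1)) (t ! i)) * (s + 1) ^ i"
      using k assms(2,3) by (intro bexI[of _ k]) auto
  qed simp
qed

lemma digit_exponents_nth:
  assumes "distinct t" "k < length t"
  shows "digit_exponents s x t (t ! k) = s - digit (s + 1) k x"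
proof -
  have "digit_exponents s x t (t ! k) = (\<Sum>i<length t. if i = k then s - digit (s + 1) i x else 0)"
    unfolding digit_exponents_def
    by (rule sum.cong) (use assms in \<open>auto simp: nth_eq_iff_index_eq\<close>)
  then show ?thesis using assms(2) by simp
qed

lemma digit_exponents_notin: "j \<notin> set t \<Longrightarrow> digit_exponents s x t j = 0"
  unfolding digit_exponents_def by (rule sum.neutral) auto

lemma digit_exponents_le:
  assumes "distinct t"
  shows "digit_exponents s x t j \<le> s"
proof (cases "j \<in> set t")
  case True
  then obtain k where "k < length t" "j = t ! k" by (auto simp: in_set_conv_nth)
  then show ?thesis using digit_exponents_nth[OF assms] by simp
qed (simp add: digit_exponents_notin)

lemma digit_exponents_map_inv:
  assumes "bij \<sigma>"
  shows "digit_exponents s x (map (inv \<sigma>) u) j = digit_exponents s x u (\<sigma> j)"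
proof -
  have "inv \<sigma> y = j \<longleftrightarrow> y = \<sigma> j" for y
    using bij_inv_eq_iff[OF assms, of j y] by auto
  then show ?thesis
    unfolding digit_exponents_def by (intro sum.cong) auto
qed

lemma tuple_rank_eq_iff:
  assumes "distinct t" "\<forall>j\<in>set t. \<alpha> j \<le> s" "x < (s + 1) ^ length t"
  shows "tuple_rank s t \<alpha> = x \<longleftrightarrow> (\<forall>j\<in>set t. \<alpha> j = digit_exponents s x t j)"
proof -
  have digit_le: "digit (s + 1) k x \<le> s" for k
    unfolding digit_def using less_Suc_eq_le by auto
  have "tuple_rank s t \<alpha> = x \<longleftrightarrow> (\<forall>k<length t. s - \<alpha> (t ! k) = digit (s + 1) k x)"
    unfolding tuple_rank_def by (rule sum_digits_eq_iff) (use assms(3) in auto)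
  also have "\<dots> \<longleftrightarrow> (\<forall>k<length t. \<alpha> (t ! k) = digit_exponents s x t (t ! k))"
  proof -
    have "s - \<alpha> (t ! k) = digit (s + 1) k x \<longleftrightarrow> \<alpha> (t ! k) = s - digit (s + 1) k x"
      if "k < length t" for k
      using assms(2) nth_mem[OF that] digit_le[of k] by auto
    then show ?thesis
      by (simp add: digit_exponents_nth[OF assms(1)])
  qed
  also have "\<dots> \<longleftrightarrow> (\<forall>j\<in>set t. \<alpha> j = digit_exponents s x t j)"
    by (metis in_set_conv_nth)
  finally show ?thesis .
qed

section \<open>The free module P_{s,n}\<close>

lemma Pcarrier_valid:
  "v \<in> Pcarrier s n \<Longrightarrow> v (\<alpha>, t) \<noteq> 0 \<Longrightarrow> valid_mono s \<alpha> \<and> valid_tuple n t"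
  unfolding Pcarrier_def by blast

lemma PcarrierI_image:
  assumes "v \<in> Pcarrier s n"
    and "{p. w p \<noteq> 0} \<subseteq> f ` {p. v p \<noteq> 0}"
    and "\<And>\<alpha> t. w (\<alpha>, t) \<noteq> 0 \<Longrightarrow> valid_mono s \<alpha> \<and> valid_tuple n t"
  shows "w \<in> Pcarrier s n"
proof -
  have "finite {p. v p \<noteq> 0}"
    using assms(1) by (simp add: Pcarrier_def)
  then have "finite {p. w p \<noteq> 0}"
    using assms(2) finite_surj by blast
  then show ?thesis
    using assms(3) by (simp add: Pcarrier_def)
qed

lemma Pcarrier_zero: "(\<lambda>_. 0) \<in> Pcarrier s n"
  by (simp add: Pcarrier_def)

lemma Pcarrier_lincomb:
  fixes v w :: "('k::semiring_0) vec"
  assumes "v \<in> Pcarrier s n" "w \<in> Pcarrier s n"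
  shows "(\<lambda>p. a * v p + b * w p) \<in> Pcarrier s n"
proof -
  have supp: "{p. a * v p + b * w p \<noteq> 0} \<subseteq> {p. v p \<noteq> 0} \<union> {p. w p \<noteq> 0}"
    by auto
  then have "finite {p. a * v p + b * w p \<noteq> 0}"
    using assms by (auto simp: Pcarrier_def intro: finite_subset)
  then show ?thesis
    using supp assms by (auto simp: Pcarrier_def)
qed

lemma Pcarrier_diff:
  fixes v w :: "('k::ring_1) vec"
  assumes "v \<in> Pcarrier s n" "w \<in> Pcarrier s n"
  shows "(\<lambda>p. v p - w p) \<in> Pcarrier s n"
  using Pcarrier_lincomb[OF assms, of 1 "-1"] by simp

lemma valid_mono_le:
  assumes "valid_mono s \<alpha>" "\<And>j. \<beta> j \<le> \<alpha> j"
  shows "valid_mono s \<beta>"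
proof -
  have "{j. \<beta> j \<noteq> 0} \<subseteq> {j. \<alpha> j \<noteq> 0}"
  proof
    fix j assume "j \<in> {j. \<beta> j \<noteq> 0}"
    then show "j \<in> {j. \<alpha> j \<noteq> 0}"
      using assms(2)[of j] by simp
  qed
  then have "finite {j. \<beta> j \<noteq> 0}"
    using assms(1) finite_subset unfolding valid_mono_def by blast
  moreover have "\<beta> j \<le> s" for j
    using assms(1) assms(2)[of j] unfolding valid_mono_def by (metis le_trans)
  ultimately show ?thesis
    using assms unfolding valid_mono_def by (metis le_zero_eq)
qed

lemma valid_mono_if_decr_valid:
  assumes "valid_mono s (\<alpha>(j := \<alpha> j - 1))" "j \<noteq> 0" "\<alpha> j \<le> s"
  shows "valid_mono s \<alpha>"
proof -
  have "{i. \<alpha> i \<noteq> 0} \<subseteq> insert j {i. (\<alpha>(j := \<alpha> j - 1)) i \<noteq> 0}"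
    by auto
  moreover have "\<alpha> i \<le> s" for i
    using assms(1,3) unfolding valid_mono_def by (metis fun_upd_other)
  ultimately show ?thesis
    using assms(1,2) unfolding valid_mono_def by (auto intro: finite_subset split: if_splits)
qed

lemma finperm_inv_simps:
  assumes "finperm \<sigma>"
  shows "\<sigma> (inv \<sigma> x) = x" "inv \<sigma> (\<sigma> x) = x" "inv \<sigma> 0 = 0"
proof -
  have "bij \<sigma>" "\<sigma> 0 = 0"
    using assms by (auto simp: finperm_def)
  then show "\<sigma> (inv \<sigma> x) = x" "inv \<sigma> (\<sigma> x) = x" "inv \<sigma> 0 = 0"
    by (auto simp: bij_is_inj bij_is_surj surj_f_inv_f inv_f_eq)
qed

lemma valid_mono_comp_finperm:
  assumes "finperm \<sigma>" "valid_mono s (\<beta> \<circ> \<sigma>)"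
  shows "valid_mono s \<beta>"
proof -
  note inv_simps = finperm_inv_simps[OF assms(1)]
  have "{i. \<beta> i \<noteq> 0} \<subseteq> \<sigma> ` {i. \<beta> (\<sigma> i) \<noteq> 0}"
    using inv_simps by (metis (mono_tags, lifting) image_eqI mem_Collect_eq subsetI)
  moreover have "\<beta> i \<le> s" for i
    using assms(2) inv_simps(1)[of i] unfolding valid_mono_def by (metis comp_apply)
  ultimately show ?thesis
    using assms inv_simps unfolding valid_mono_def finperm_def
    by (auto intro: finite_subset)
qed

lemma valid_tuple_map_inv:
  assumes "finperm \<sigma>" "valid_tuple n (map (inv \<sigma>) u)"
  shows "valid_tuple n u"
  using assms finperm_inv_simps[OF assms(1)]
  unfolding valid_tuple_def by (force simp: distinct_map)

lemma Pcarrier_xmul: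
  fixes v :: "('k::zero) vec"
  assumes "v \<in> Pcarrier s n" "1 \<le> j"
  shows "xmul s j v \<in> Pcarrier s n"
proof (rule PcarrierI_image[OF assms(1)])
  show "{p. xmul s j v p \<noteq> 0} \<subseteq> (\<lambda>(\<alpha>, t). (\<alpha>(j := Suc (\<alpha> j)), t)) ` {p. v p \<noteq> 0}"
  proof
    fix p assume "p \<in> {p. xmul s j v p \<noteq> 0}"
    then obtain \<alpha> t where p: "p = (\<alpha>, t)" "1 \<le> \<alpha> j" "v (\<alpha>(j := \<alpha> j - 1), t) \<noteq> 0"
      by (cases p) (auto simp: xmul_def split: if_splits)
    then show "p \<in> (\<lambda>(\<alpha>, t). (\<alpha>(j := Suc (\<alpha> j)), t)) ` {p. v p \<noteq> 0}"
      by (intro image_eqI[of _ _ "(\<alpha>(j := \<alpha> j - 1), t)"]) auto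
  qed
  fix \<alpha> t assume "xmul s j v (\<alpha>, t) \<noteq> 0"
  then have "\<alpha> j \<le> s" "v (\<alpha>(j := \<alpha> j - 1), t) \<noteq> 0"
    by (auto simp: xmul_def split: if_splits)
  moreover from this(2) have "valid_mono s (\<alpha>(j := \<alpha> j - 1)) \<and> valid_tuple n t"
    by (rule Pcarrier_valid[OF assms(1)])
  moreover have "j \<noteq> 0"
    using assms(2) by simp
  ultimately show "valid_mono s \<alpha> \<and> valid_tuple n t"
    using valid_mono_if_decr_valid by blast
qed

lemma Pcarrier_pact:
  fixes v :: "('k::zero) vec"
  assumes "v \<in> Pcarrier s n" "finperm \<sigma>"
  shows "pact \<sigma> v \<in> Pcarrier s n"
proof (rule PcarrierI_image[OF assms(1)])
  note inv_simps = finperm_inv_simps[OF assms(2)]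
  show "{p. pact \<sigma> v p \<noteq> 0} \<subseteq> (\<lambda>(\<alpha>, t). (\<alpha> \<circ> inv \<sigma>, map \<sigma> t)) ` {p. v p \<noteq> 0}"
  proof
    fix p assume "p \<in> {p. pact \<sigma> v p \<noteq> 0}"
    then obtain \<beta> u where p: "p = (\<beta>, u)" "v (\<beta> \<circ> \<sigma>, map (inv \<sigma>) u) \<noteq> 0"
      by (cases p) (auto simp: pact_def)
    then show "p \<in> (\<lambda>(\<alpha>, t). (\<alpha> \<circ> inv \<sigma>, map \<sigma> t)) ` {p. v p \<noteq> 0}"
      by (intro image_eqI[of _ _ "(\<beta> \<circ> \<sigma>, map (inv \<sigma>) u)"])
        (auto simp: comp_def inv_simps map_idI)
  qed
  fix \<alpha> t assume "pact \<sigma> v (\<alpha>, t) \<noteq> 0"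
  then have "v (\<alpha> \<circ> \<sigma>, map (inv \<sigma>) t) \<noteq> 0"
    by (simp add: pact_def)
  then show "valid_mono s \<alpha> \<and> valid_tuple n t"
    using Pcarrier_valid[OF assms(1)] valid_mono_comp_finperm valid_tuple_map_inv assms(2) by blast
qed

lemma ebasis_in_Pcarrier:
  assumes "valid_mono s \<beta>" "valid_tuple n t"
  shows "(ebasis (\<beta>, t) :: ('k::zero_neq_one) vec) \<in> Pcarrier s n"
proof -
  have "{p. (ebasis (\<beta>, t) :: 'k vec) p \<noteq> 0} = {(\<beta>, t)}"
    by (auto simp: ebasis_def)
  then show ?thesis
    using assms by (simp add: Pcarrier_def ebasis_def)
qed

definition Psupported ::
  "nat \<Rightarrow> nat \<Rightarrow> ((nat \<Rightarrow> nat) \<Rightarrow> nat list \<Rightarrow> bool) \<Rightarrow> ('k::zero) vec set"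
where
  "Psupported s n G = {v \<in> Pcarrier s n. \<forall>\<alpha> t. v (\<alpha>, t) \<noteq> 0 \<longrightarrow> G \<alpha> t}"

lemma is_submod_Psupported:
  assumes mono: "\<And>\<alpha> \<alpha>' t. G \<alpha> t \<Longrightarrow> (\<And>j. \<alpha> j \<le> \<alpha>' j) \<Longrightarrow> G \<alpha>' t"
    and perm: "\<And>\<sigma> \<beta> u. finperm \<sigma> \<Longrightarrow> G (\<beta> \<circ> \<sigma>) (map (inv \<sigma>) u) \<Longrightarrow> G \<beta> u"
  shows "is_submod s n (Psupported s n G :: ('k::field) vec set)"
  unfolding is_submod_def
proof (intro conjI ballI allI impI)
  show "Psupported s n G \<subseteq> Pcarrier s n" "(\<lambda>_. 0) \<in> Psupported s n G"
    by (auto simp: Psupported_def Pcarrier_zero)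
next
  fix v w :: "'k vec" and a b :: 'k
  assume "v \<in> Psupported s n G" "w \<in> Psupported s n G"
  moreover have "v (\<alpha>, t) \<noteq> 0 \<or> w (\<alpha>, t) \<noteq> 0" if "a * v (\<alpha>, t) + b * w (\<alpha>, t) \<noteq> 0" for \<alpha> t
    using that by auto
  ultimately show "(\<lambda>p. a * v p + b * w p) \<in> Psupported s n G"
    unfolding Psupported_def using Pcarrier_lincomb by blast
next
  fix j :: nat and v :: "'k vec"
  assume j: "1 \<le> j" and v: "v \<in> Psupported s n G"
  have "G \<alpha> t" if "xmul s j v (\<alpha>, t) \<noteq> 0" for \<alpha> t
  proof -
    have "v (\<alpha>(j := \<alpha> j - 1), t) \<noteq> 0"
      using that by (auto simp: xmul_def split: if_splits)
    then have "G (\<alpha>(j := \<alpha> j - 1)) t"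
      using v by (simp add: Psupported_def)
    then show ?thesis
      by (rule mono) simp
  qed
  then show "xmul s j v \<in> Psupported s n G"
    using v j by (simp add: Psupported_def Pcarrier_xmul)
next
  fix \<sigma> :: "nat \<Rightarrow> nat" and v :: "'k vec"
  assume \<sigma>: "finperm \<sigma>" and v: "v \<in> Psupported s n G"
  have "G \<alpha> t" if "pact \<sigma> v (\<alpha>, t) \<noteq> 0" for \<alpha> t
    using that v perm[OF \<sigma>] by (simp add: Psupported_def pact_def)
  then show "pact \<sigma> v \<in> Psupported s n G"
    using v \<sigma> by (simp add: Psupported_def Pcarrier_pact)
qed

section \<open>The submodule generated by the x_i e_t\<close>

lemma xmul_ebasis:
  assumes "\<gamma> k < s"
  shows "xmul s k (ebasis (\<gamma>, t)) = (ebasis (\<gamma>(k := Suc (\<gamma> k)), t) :: ('k::{zero,one}) vec)"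
proof (rule ext)
  fix p :: "(nat \<Rightarrow> nat) \<times> nat list"
  obtain \<alpha> t' where p: "p = (\<alpha>, t')"
    by (cases p)
  have "(1 \<le> \<alpha> k \<and> \<alpha> k \<le> s \<and> \<alpha>(k := \<alpha> k - 1) = \<gamma>) \<longleftrightarrow> \<alpha> = \<gamma>(k := Suc (\<gamma> k))"
  proof
    assume lhs: "1 \<le> \<alpha> k \<and> \<alpha> k \<le> s \<and> \<alpha>(k := \<alpha> k - 1) = \<gamma>"
    show "\<alpha> = \<gamma>(k := Suc (\<gamma> k))"
    proof
      fix i
      show "\<alpha> i = (\<gamma>(k := Suc (\<gamma> k))) i"
        using lhs fun_cong[of "\<alpha>(k := \<alpha> k - 1)" \<gamma> i] by (cases "i = k") auto
    qed
  qed (use assms in auto)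
  then show "xmul s k (ebasis (\<gamma>, t)) p = (ebasis (\<gamma>(k := Suc (\<gamma> k)), t) :: 'k vec) p"
    unfolding p xmul_def ebasis_def by auto
qed

lemma sum_support_decr_less:
  fixes \<gamma> :: "'a \<Rightarrow> nat"
  assumes "finite {i. \<gamma> i \<noteq> 0}" "\<gamma> k \<noteq> 0"
  shows "sum (\<gamma>(k := \<gamma> k - 1)) {i. (\<gamma>(k := \<gamma> k - 1)) i \<noteq> 0} < sum \<gamma> {i. \<gamma> i \<noteq> 0}"
proof -
  have "sum (\<gamma>(k := \<gamma> k - 1)) {i. (\<gamma>(k := \<gamma> k - 1)) i \<noteq> 0}
      = sum (\<gamma>(k := \<gamma> k - 1)) {i. \<gamma> i \<noteq> 0}"
    by (rule sum.mono_neutral_left) (use assms(1) in auto)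
  also have "\<dots> < sum \<gamma> {i. \<gamma> i \<noteq> 0}"
    by (rule sum_strict_mono_ex1) (use assms in auto)
  finally show ?thesis .
qed

lemma ebasis_in_submod_mono:
  assumes N: "is_submod s n (N :: ('k::field) vec set)"
    and "ebasis (\<beta>, t) \<in> N" "\<And>j. \<beta> j \<le> \<gamma> j" "valid_mono s \<gamma>"
  shows "ebasis (\<gamma>, t) \<in> N"
  using assms(3,4)
proof (induction "sum \<gamma> {i. \<gamma> i \<noteq> 0}" arbitrary: \<gamma> rule: less_induct)
  case less
  show ?case
  proof (cases "\<gamma> = \<beta>")
    case True
    then show ?thesis using assms(2) by simp
  next
    case False
    then obtain k where k: "\<beta> k < \<gamma> k"
      using less.prems(1) by (metis ext le_neq_implies_less)
    let ?\<gamma>' = "\<gamma>(k := \<gamma> k - 1)"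
    have \<gamma>: "finite {i. \<gamma> i \<noteq> 0}" "\<gamma> 0 = 0" "\<gamma> k \<le> s"
      using less.prems(2) by (auto simp: valid_mono_def)
    have "ebasis (?\<gamma>', t) \<in> N"
    proof (rule less.hyps)
      show "sum ?\<gamma>' {i. ?\<gamma>' i \<noteq> 0} < sum \<gamma> {i. \<gamma> i \<noteq> 0}"
        using sum_support_decr_less[OF \<gamma>(1), of k] k by linarith
      show "\<beta> j \<le> ?\<gamma>' j" for j
        using less.prems(1)[of j] k by auto
      show "valid_mono s ?\<gamma>'"
        by (rule valid_mono_le[OF less.prems(2)]) simp
    qed
    moreover have "1 \<le> k"
      using k \<gamma>(2) by (cases k) auto
    ultimately have mem: "xmul s k (ebasis (?\<gamma>', t)) \<in> N"
      using N by (simp add: is_submod_def)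
    have lt: "?\<gamma>' k < s" and upd: "?\<gamma>'(k := Suc (?\<gamma>' k)) = \<gamma>"
      using k \<gamma>(3) by auto
    from xmul_ebasis[of ?\<gamma>' k s t, OF lt] have "xmul s k (ebasis (?\<gamma>', t)) = (ebasis (\<gamma>, t) :: 'k vec)"
      unfolding upd .
    with mem show ?thesis
      by (simp only:)
  qed
qed

lemma submod_mem_if_ebasis:
  assumes N: "is_submod s n (N :: ('k::field) vec set)"
    and "finite {p. v p \<noteq> 0}" "\<And>p. v p \<noteq> 0 \<Longrightarrow> ebasis p \<in> N"
  shows "v \<in> N"
proof -
  have "\<forall>v :: 'k vec. {p. v p \<noteq> 0} \<subseteq> S \<longrightarrow> (\<forall>p. v p \<noteq> 0 \<longrightarrow> ebasis p \<in> N) \<longrightarrow> v \<in> N"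
    if "finite S" for S
    using that
  proof (induction S rule: finite_induct)
    case empty
    have "(\<lambda>_. 0) \<in> N"
      using N by (simp add: is_submod_def)
    moreover have "v = (\<lambda>_. 0)" if "{p. v p \<noteq> 0} \<subseteq> {}" for v :: "'k vec"
      using that by auto
    ultimately show ?case
      by auto
  next
    case (insert p S)
    show ?case
    proof (intro allI impI)
      fix v :: "'k vec"
      assume supp: "{q. v q \<noteq> 0} \<subseteq> insert p S" and basis: "\<forall>q. v q \<noteq> 0 \<longrightarrow> ebasis q \<in> N"
      have "{q. (v(p := 0)) q \<noteq> 0} \<subseteq> S"
        using supp by auto
      moreover have "\<forall>q. (v(p := 0)) q \<noteq> 0 \<longrightarrow> ebasis q \<in> N"
        using basis by simp
      ultimately have mem: "v(p := 0) \<in> N"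
        using insert.IH by blast
      show "v \<in> N"
      proof (cases "v p = 0")
        case True
        then have "v(p := 0) = v"
          by auto
        with mem show ?thesis
          by simp
      next
        case False
        then have "(\<lambda>q. 1 * (v(p := 0)) q + v p * ebasis p q) \<in> N"
          using N mem basis unfolding is_submod_def by blast
        moreover have "(\<lambda>q. 1 * (v(p := 0)) q + v p * ebasis p q) = v"
          by (auto simp: ebasis_def)
        ultimately show ?thesis
          by simp
      qed
    qed
  qed
  then show ?thesis
    using assms(2,3) by blast
qed

lemma is_submod_Psupported_divisible:
  "is_submod s n (Psupported s n (\<lambda>\<alpha> t. \<exists>j\<in>set t. \<alpha> j \<noteq> 0) :: ('k::field) vec set)"
proof (rule is_submod_Psupported)
  fix \<alpha> \<alpha>' :: "nat \<Rightarrow> nat" and t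
  assume "\<exists>j\<in>set t. \<alpha> j \<noteq> 0" "\<And>j. \<alpha> j \<le> \<alpha>' j"
  then show "\<exists>j\<in>set t. \<alpha>' j \<noteq> 0"
    by (metis le_zero_eq)
next
  fix \<sigma> \<beta> u
  assume "finperm \<sigma>" "\<exists>j\<in>set (map (inv \<sigma>) u). (\<beta> \<circ> \<sigma>) j \<noteq> 0"
  then show "\<exists>j\<in>set u. \<beta> j \<noteq> 0"
    using finperm_inv_simps(1) by fastforce
qed

lemma Qgens_subset_Psupported_divisible:
  "Qgens s n \<subseteq> (Psupported s n (\<lambda>\<alpha> t. \<exists>j\<in>set t. \<alpha> j \<noteq> 0) :: ('k::field) vec set)"
proof
  fix v :: "'k vec"
  assume "v \<in> Qgens s n"
  then obtain i t where v: "v = xmul s i (ebasis (\<lambda>_. 0, t))" and t: "valid_tuple n t" "i \<in> set t"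
    unfolding Qgens_def by blast
  have "1 \<le> i"
    using t by (cases i) (auto simp: valid_tuple_def)
  moreover have "(ebasis (\<lambda>_. 0, t) :: 'k vec) \<in> Pcarrier s n"
    by (rule ebasis_in_Pcarrier[OF _ t(1)]) (simp add: valid_mono_def)
  ultimately have "v \<in> Pcarrier s n"
    using v Pcarrier_xmul by simp
  moreover have "\<exists>j\<in>set t'. \<alpha> j \<noteq> 0" if "v (\<alpha>, t') \<noteq> 0" for \<alpha> t'
    using that t(2) by (auto simp: v xmul_def ebasis_def intro!: bexI[of _ i] split: if_splits)
  ultimately show "v \<in> Psupported s n (\<lambda>\<alpha> t. \<exists>j\<in>set t. \<alpha> j \<noteq> 0)"
    by (simp add: Psupported_def)
qed

lemma Psupported_divisible_subset_submod:
  assumes N: "is_submod s n (N :: ('k::field) vec set)" "Qgens s n \<subseteq> N"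
  shows "Psupported s n (\<lambda>\<alpha> t. \<exists>j\<in>set t. \<alpha> j \<noteq> 0) \<subseteq> N"
proof
  fix v :: "'k vec"
  assume v: "v \<in> Psupported s n (\<lambda>\<alpha> t. \<exists>j\<in>set t. \<alpha> j \<noteq> 0)"
  show "v \<in> N"
  proof (rule submod_mem_if_ebasis[OF N(1)])
    show "finite {p. v p \<noteq> 0}"
      using v by (simp add: Psupported_def Pcarrier_def)
    fix p
    assume nz: "v p \<noteq> 0"
    obtain \<gamma> t where p: "p = (\<gamma>, t)"
      by (cases p)
    have valid: "valid_mono s \<gamma>" "valid_tuple n t" and "\<exists>j\<in>set t. \<gamma> j \<noteq> 0"
      using v nz unfolding p Psupported_def Pcarrier_def by auto
    then obtain j where j: "j \<in> set t" "\<gamma> j \<noteq> 0"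
      by blast
    have "0 < s"
      using valid(1) j(2) by (metis le_zero_eq neq0_conv valid_mono_def)
    then have "(ebasis ((\<lambda>_. 0)(j := 1), t) :: 'k vec) = xmul s j (ebasis (\<lambda>_. 0, t))"
      by (simp add: xmul_ebasis)
    also have "\<dots> \<in> N"
      using N(2) j(1) valid(2) unfolding Qgens_def by blast
    finally show "ebasis p \<in> N"
      unfolding p by (rule ebasis_in_submod_mono[OF N(1)]) (use j(2) valid(1) in auto)
  qed
qed

lemma Nsub_eq_Psupported_divisible:
  "Nsub s n = (Psupported s n (\<lambda>\<alpha> t. \<exists>j\<in>set t. \<alpha> j \<noteq> 0) :: ('k::field) vec set)"
  unfolding Nsub_def
  using is_submod_Psupported_divisible Qgens_subset_Psupported_divisible
    Psupported_divisible_subset_submod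
  by blast

lemma diff_in_Nsub:
  fixes w w' :: "('k::field) vec"
  assumes "w \<in> Pcarrier s n" "w' \<in> Pcarrier s n"
    and "\<And>\<beta> t. valid_tuple n t \<Longrightarrow> \<forall>j\<in>set t. \<beta> j = 0 \<Longrightarrow> w (\<beta>, t) = w' (\<beta>, t)"
  shows "(\<lambda>p. w p - w' p) \<in> Nsub s n"
proof -
  have "\<exists>j\<in>set t. \<beta> j \<noteq> 0" if "w (\<beta>, t) - w' (\<beta>, t) \<noteq> 0" for \<beta> t
  proof (rule ccontr)
    assume "\<not> (\<exists>j\<in>set t. \<beta> j \<noteq> 0)"
    moreover have "valid_tuple n t"
      using that Pcarrier_valid[OF Pcarrier_diff[OF assms(1,2)]] by blast
    ultimately show False
      using that assms(3) by simp
  qed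
  then show ?thesis
    using Pcarrier_diff[OF assms(1,2)]
    by (simp add: Nsub_eq_Psupported_divisible Psupported_def)
qed

section \<open>The rank filtration and its graded pieces\<close>

lemma lift_exponents_ge: "\<beta> j \<le> lift_exponents s x t \<beta> j"
  by (simp add: lift_exponents_def)

lemma lift_exponents_upd:
  "j \<notin> set t \<Longrightarrow> lift_exponents s x t (\<beta>(j := c)) = (lift_exponents s x t \<beta>)(j := c)"
  by (auto simp: lift_exponents_def digit_exponents_notin)

lemma lift_exponents_map_inv:
  "bij \<sigma> \<Longrightarrow> lift_exponents s x (map (inv \<sigma>) u) (\<beta> \<circ> \<sigma>) = lift_exponents s x u \<beta> \<circ> \<sigma>"
  by (auto simp: lift_exponents_def digit_exponents_map_inv)

lemma override_lift_exponents:
  "\<forall>j\<in>set t. \<beta> j = 0 \<Longrightarrow> override_on (lift_exponents s x t \<beta>) (\<lambda>_. 0) (set t) = \<beta>"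
  by (auto simp: override_on_def lift_exponents_def digit_exponents_notin)

lemma lift_override_exponents:
  "\<forall>j\<in>set t. \<alpha> j = digit_exponents s x t j
    \<Longrightarrow> lift_exponents s x t (override_on \<alpha> (\<lambda>_. 0) (set t)) = \<alpha>"
  by (auto simp: override_on_def lift_exponents_def digit_exponents_notin)

lemma tuple_rank_lift_exponents:
  assumes "distinct t" "\<forall>j\<in>set t. \<beta> j = 0" "x < (s + 1) ^ length t"
  shows "tuple_rank s t (lift_exponents s x t \<beta>) = x"
  using assms digit_exponents_le[OF assms(1)]
  by (simp add: tuple_rank_eq_iff lift_exponents_def)

lemma valid_mono_lift_exponents:
  assumes "valid_mono s \<beta>" "valid_tuple n t" "\<forall>j\<in>set t. \<beta> j = 0"
  shows "valid_mono s (lift_exponents s x t \<beta>)"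
proof -
  have t: "distinct t" "0 \<notin> set t"
    using assms(2) by (auto simp: valid_tuple_def)
  have "{j. lift_exponents s x t \<beta> j \<noteq> 0} \<subseteq> {j. \<beta> j \<noteq> 0} \<union> set t"
    by (auto simp: lift_exponents_def digit_exponents_notin)
  moreover have "lift_exponents s x t \<beta> j \<le> s" for j
    using assms(1,3) digit_exponents_le[OF t(1)]
    by (cases "j \<in> set t") (auto simp: lift_exponents_def digit_exponents_notin valid_mono_def)
  ultimately show ?thesis
    using assms(1) t(2) by (auto simp: valid_mono_def lift_exponents_def digit_exponents_notin
        intro: finite_subset)
qed

definition rank_filtration :: "nat \<Rightarrow> nat \<Rightarrow> nat \<Rightarrow> ('k::zero) vec set" where
  "rank_filtration s n i = Psupported s n (\<lambda>\<alpha> t. tuple_rank s t \<alpha> < i)"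

lemma is_submod_rank_filtration: "is_submod s n (rank_filtration s n i)"
  unfolding rank_filtration_def
proof (rule is_submod_Psupported)
  fix \<alpha> \<alpha>' :: "nat \<Rightarrow> nat" and t
  assume "tuple_rank s t \<alpha> < i" "\<And>j. \<alpha> j \<le> \<alpha>' j"
  then show "tuple_rank s t \<alpha>' < i"
    using tuple_rank_antimono by (metis le_less_trans)
next
  fix \<sigma> \<beta> u
  assume "finperm \<sigma>" "tuple_rank s (map (inv \<sigma>) u) (\<beta> \<circ> \<sigma>) < i"
  then show "tuple_rank s u \<beta> < i"
    by (simp add: tuple_rank_map comp_def finperm_inv_simps)
qed

lemma rank_filtration_0: "rank_filtration s n 0 = {\<lambda>_. 0}"
  by (auto simp: rank_filtration_def Psupported_def Pcarrier_zero)

lemma rank_filtration_top: "rank_filtration s n ((s + 1) ^ n) = Pcarrier s n"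
  using tuple_rank_less_power
  by (fastforce simp: rank_filtration_def Psupported_def Pcarrier_def valid_tuple_def)

lemma rank_filtration_mono: "i \<le> i' \<Longrightarrow> rank_filtration s n i \<subseteq> rank_filtration s n i'"
  by (fastforce simp: rank_filtration_def Psupported_def)

lemma rank_filtration_Pcarrier: "v \<in> rank_filtration s n i \<Longrightarrow> v \<in> Pcarrier s n"
  by (simp add: rank_filtration_def Psupported_def)

text \<open>graded_map s x v (\<beta>, t) is the coefficient of x^(\<beta> + d) e_t in v, where
d = digit_exponents s x t is the only exponent pattern on the variables of t of rank x
(tuple_rank_eq_iff). It is read only for \<beta> vanishing on t: the remaining monomials x^\<beta> e_t
lie in Nsub anyway.\<close>

definition graded_map :: "nat \<Rightarrow> nat \<Rightarrow> ('k::zero) vec \<Rightarrow> 'k vec" where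
  "graded_map s x v =
    (\<lambda>(\<beta>, t). if \<forall>j\<in>set t. \<beta> j = 0 then v (lift_exponents s x t \<beta>, t) else 0)"

lemma graded_map_Pcarrier:
  fixes v :: "('k::zero) vec"
  assumes v: "v \<in> Pcarrier s n"
  shows "graded_map s x v \<in> Pcarrier s n"
proof (rule PcarrierI_image[OF v])
  show "{p. graded_map s x v p \<noteq> 0}
      \<subseteq> (\<lambda>(\<alpha>, t). (override_on \<alpha> (\<lambda>_. 0) (set t), t)) ` {p. v p \<noteq> 0}"
  proof
    fix p assume "p \<in> {p. graded_map s x v p \<noteq> 0}"
    then obtain \<beta> t where p: "p = (\<beta>, t)" "\<forall>j\<in>set t. \<beta> j = 0"
        "v (lift_exponents s x t \<beta>, t) \<noteq> 0"
      by (cases p) (auto simp: graded_map_def split: if_splits)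
    then show "p \<in> (\<lambda>(\<alpha>, t). (override_on \<alpha> (\<lambda>_. 0) (set t), t)) ` {p. v p \<noteq> 0}"
      by (intro image_eqI[of _ _ "(lift_exponents s x t \<beta>, t)"])
        (auto simp: override_lift_exponents)
  qed
  fix \<beta> t assume "graded_map s x v (\<beta>, t) \<noteq> 0"
  then have "v (lift_exponents s x t \<beta>, t) \<noteq> 0"
    by (auto simp: graded_map_def split: if_splits)
  then show "valid_mono s \<beta> \<and> valid_tuple n t"
    using Pcarrier_valid[OF v] valid_mono_le lift_exponents_ge by blast
qed

lemma graded_map_lincomb:
  "graded_map s x (\<lambda>q. a * v q + b * w q)
    = (\<lambda>p. a * graded_map s x v p + b * graded_map s x w p :: 'k::semiring_0)"
  by (auto simp: graded_map_def)

lemma graded_map_pact: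
  assumes "bij \<sigma>"
  shows "graded_map s x (pact \<sigma> v) = pact \<sigma> (graded_map s x v)"
proof (rule ext)
  fix p :: "(nat \<Rightarrow> nat) \<times> nat list"
  obtain \<beta> u where p: "p = (\<beta>, u)"
    by (cases p)
  have "(\<forall>j\<in>set (map (inv \<sigma>) u). (\<beta> \<circ> \<sigma>) j = 0) \<longleftrightarrow> (\<forall>j\<in>set u. \<beta> j = 0)"
    using assms by (simp add: bij_is_surj surj_f_inv_f)
  then show "graded_map s x (pact \<sigma> v) p = pact \<sigma> (graded_map s x v) p"
    using lift_exponents_map_inv[OF assms] by (simp add: p graded_map_def pact_def)
qed

lemma graded_map_xmul:
  fixes v :: "('k::zero) vec"
  assumes v: "v \<in> rank_filtration s n (Suc x)" and x: "x < (s + 1) ^ n"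
    and t: "valid_tuple n t" and \<beta>: "\<forall>i\<in>set t. \<beta> i = 0"
  shows "graded_map s x (xmul s j v) (\<beta>, t) = xmul s j (graded_map s x v) (\<beta>, t)"
proof (cases "j \<in> set t")
  case True
  let ?L = "lift_exponents s x t \<beta>"
  have "v (?L(j := ?L j - 1), t) = 0" if "1 \<le> ?L j" "?L j \<le> s"
  proof -
    have "tuple_rank s t ?L = x"
      using tuple_rank_lift_exponents \<beta> t x by (simp add: valid_tuple_def)
    then have "\<not> tuple_rank s t (?L(j := ?L j - 1)) < Suc x"
      using tuple_rank_less_decr[of j t ?L s, OF True that] by simp
    then show ?thesis
      using v unfolding rank_filtration_def Psupported_def by blast
  qed
  then show ?thesis
    using True \<beta> by (simp add: graded_map_def xmul_def)
next
  case False
  then show ?thesis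
    using \<beta> by (simp add: graded_map_def xmul_def lift_exponents_upd lift_exponents_def
        digit_exponents_notin)
qed

definition graded_lift :: "nat \<Rightarrow> nat \<Rightarrow> ('k::zero) vec \<Rightarrow> 'k vec" where
  "graded_lift s x u =
    (\<lambda>(\<alpha>, t). if \<forall>j\<in>set t. \<alpha> j = digit_exponents s x t j
                then u (override_on \<alpha> (\<lambda>_. 0) (set t), t) else 0)"

lemma graded_map_graded_lift:
  "\<forall>j\<in>set t. \<beta> j = 0 \<Longrightarrow> graded_map s x (graded_lift s x u) (\<beta>, t) = u (\<beta>, t)"
  by (simp add: graded_map_def graded_lift_def override_lift_exponents)
    (simp add: lift_exponents_def)

lemma graded_lift_in_rank_filtration:
  fixes u :: "('k::zero) vec"
  assumes u: "u \<in> Pcarrier s n" and x: "x < (s + 1) ^ n"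
  shows "graded_lift s x u \<in> rank_filtration s n (Suc x)"
proof -
  let ?v = "graded_lift s x u"
  have supp: "(\<forall>j\<in>set t. \<alpha> j = digit_exponents s x t j)
      \<and> u (override_on \<alpha> (\<lambda>_. 0) (set t), t) \<noteq> 0" if "?v (\<alpha>, t) \<noteq> 0" for \<alpha> t
    using that by (auto simp: graded_lift_def split: if_splits)
  have valid: "valid_mono s \<alpha> \<and> valid_tuple n t" if "?v (\<alpha>, t) \<noteq> 0" for \<alpha> t
  proof -
    have "valid_mono s (override_on \<alpha> (\<lambda>_. 0) (set t))" "valid_tuple n t"
      using supp[OF that] Pcarrier_valid[OF u] by blast+
    then have "valid_mono s (lift_exponents s x t (override_on \<alpha> (\<lambda>_. 0) (set t)))"
      by (rule valid_mono_lift_exponents) (simp add: override_on_def)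
    then show ?thesis
      using supp[OF that] \<open>valid_tuple n t\<close> by (simp add: lift_override_exponents)
  qed
  have "?v \<in> Pcarrier s n"
  proof (rule PcarrierI_image[OF u _ valid])
    show "{p. ?v p \<noteq> 0} \<subseteq> (\<lambda>(\<beta>, t). (lift_exponents s x t \<beta>, t)) ` {p. u p \<noteq> 0}"
    proof
      fix p assume "p \<in> {p. ?v p \<noteq> 0}"
      then obtain \<alpha> t where p: "p = (\<alpha>, t)" "?v (\<alpha>, t) \<noteq> 0"
        by (cases p) auto
      then show "p \<in> (\<lambda>(\<beta>, t). (lift_exponents s x t \<beta>, t)) ` {p. u p \<noteq> 0}"
        using supp[OF p(2)]
        by (intro image_eqI[of _ _ "(override_on \<alpha> (\<lambda>_. 0) (set t), t)"])
          (auto simp: lift_override_exponents)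
    qed
  qed
  moreover have "tuple_rank s t \<alpha> = x" if "?v (\<alpha>, t) \<noteq> 0" for \<alpha> t
  proof -
    have t: "distinct t" "length t = n"
      using valid[OF that] by (auto simp: valid_tuple_def)
    then show ?thesis
      using supp[OF that] digit_exponents_le[OF t(1)] x by (simp add: tuple_rank_eq_iff)
  qed
  ultimately show ?thesis
    by (simp add: rank_filtration_def Psupported_def)
qed

lemma graded_map_eq_zero:
  fixes v :: "('k::zero) vec"
  assumes v: "v \<in> rank_filtration s n x" and x: "x < (s + 1) ^ n"
  shows "graded_map s x v = (\<lambda>_. 0)"
proof -
  have "graded_map s x v (\<beta>, t) = 0" for \<beta> t
  proof (rule ccontr)
    assume "graded_map s x v (\<beta>, t) \<noteq> 0"
    then have \<beta>: "\<forall>j\<in>set t. \<beta> j = 0" and nz: "v (lift_exponents s x t \<beta>, t) \<noteq> 0"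
      by (auto simp: graded_map_def split: if_splits)
    have "valid_tuple n t"
      using nz v by (auto simp: rank_filtration_def Psupported_def Pcarrier_def)
    then have "tuple_rank s t (lift_exponents s x t \<beta>) = x"
      using tuple_rank_lift_exponents \<beta> x by (simp add: valid_tuple_def)
    moreover have "tuple_rank s t (lift_exponents s x t \<beta>) < x"
      using nz v unfolding rank_filtration_def Psupported_def by blast
    ultimately show False
      by simp
  qed
  then show ?thesis
    by auto
qed

lemma graded_map_in_Nsub_iff:
  fixes v :: "('k::field) vec"
  assumes v: "v \<in> rank_filtration s n (Suc x)" and x: "x < (s + 1) ^ n"
  shows "graded_map s x v \<in> Nsub s n \<longleftrightarrow> v \<in> rank_filtration s n x"
proof
  have vP: "v \<in> Pcarrier s n" and v_rank: "\<And>\<alpha> t. v (\<alpha>, t) \<noteq> 0 \<Longrightarrow> tuple_rank s t \<alpha> < Suc x"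
    using v by (auto simp: rank_filtration_def Psupported_def)
  assume N: "graded_map s x v \<in> Nsub s n"
  have "tuple_rank s t \<alpha> < x" if nz: "v (\<alpha>, t) \<noteq> 0" for \<alpha> t
  proof (rule ccontr)
    assume "\<not> tuple_rank s t \<alpha> < x"
    then have rank: "tuple_rank s t \<alpha> = x"
      using v_rank[OF nz] by simp
    have "valid_mono s \<alpha>" "valid_tuple n t"
      using Pcarrier_valid[OF vP nz] by blast+
    then have "\<forall>j\<in>set t. \<alpha> j = digit_exponents s x t j"
      using rank x tuple_rank_eq_iff[of t \<alpha> s x] by (auto simp: valid_tuple_def valid_mono_def)
    then have "graded_map s x v (override_on \<alpha> (\<lambda>_. 0) (set t), t) \<noteq> 0"
      using nz by (simp add: graded_map_def lift_override_exponents)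
    then have "\<exists>j\<in>set t. override_on \<alpha> (\<lambda>_. 0) (set t) j \<noteq> 0"
      using N unfolding Nsub_eq_Psupported_divisible Psupported_def by blast
    then show False
      by (simp add: override_on_def)
  qed
  then show "v \<in> rank_filtration s n x"
    using vP by (simp add: rank_filtration_def Psupported_def)
next
  assume "v \<in> rank_filtration s n x"
  then have "graded_map s x v = (\<lambda>_. 0)"
    by (rule graded_map_eq_zero[OF _ x])
  then show "graded_map s x v \<in> Nsub s n"
    by (simp add: Nsub_eq_Psupported_divisible Psupported_def Pcarrier_zero)
qed

lemma iso_to_Q_rank_filtration:
  assumes bound: "x < (s + 1) ^ n"
  shows "iso_to_Q s n (rank_filtration s n (Suc x)) (rank_filtration s n x :: ('k::field) vec set)"
  unfolding iso_to_Q_def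
proof (intro exI[of _ "graded_map s x"] conjI ballI allI impI)
  fix v :: "'k vec"
  assume v: "v \<in> rank_filtration s n (Suc x)"
  show "graded_map s x v \<in> Pcarrier s n"
    by (rule graded_map_Pcarrier[OF rank_filtration_Pcarrier[OF v]])
  show "graded_map s x v \<in> Nsub s n \<longleftrightarrow> v \<in> rank_filtration s n x"
    by (rule graded_map_in_Nsub_iff[OF v bound])
  fix w :: "'k vec" and a b :: 'k
  assume w: "w \<in> rank_filtration s n (Suc x)"
  show "(\<lambda>p. graded_map s x (\<lambda>q. a * v q + b * w q) p
      - (a * graded_map s x v p + b * graded_map s x w p)) \<in> Nsub s n"
    unfolding graded_map_lincomb
    by (intro diff_in_Nsub Pcarrier_lincomb graded_map_Pcarrier refl
        rank_filtration_Pcarrier[OF v] rank_filtration_Pcarrier[OF w])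
next
  fix j :: nat and v :: "'k vec"
  assume "1 \<le> j" "v \<in> rank_filtration s n (Suc x)"
  then show "(\<lambda>p. graded_map s x (xmul s j v) p - xmul s j (graded_map s x v) p) \<in> Nsub s n"
    by (intro diff_in_Nsub graded_map_Pcarrier Pcarrier_xmul rank_filtration_Pcarrier
        graded_map_xmul[OF _ bound])
next
  fix \<sigma> :: "nat \<Rightarrow> nat" and v :: "'k vec"
  assume "finperm \<sigma>" "v \<in> rank_filtration s n (Suc x)"
  then show "(\<lambda>p. graded_map s x (pact \<sigma> v) p - pact \<sigma> (graded_map s x v) p) \<in> Nsub s n"
    by (intro diff_in_Nsub graded_map_Pcarrier Pcarrier_pact rank_filtration_Pcarrier)
      (simp_all add: graded_map_pact finperm_def)
next
  fix u :: "'k vec"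
  assume u: "u \<in> Pcarrier s n"
  have lift: "graded_lift s x u \<in> rank_filtration s n (Suc x)"
    by (rule graded_lift_in_rank_filtration[OF u bound])
  have "(\<lambda>p. graded_map s x (graded_lift s x u) p - u p) \<in> Nsub s n"
    by (rule diff_in_Nsub[OF graded_map_Pcarrier[OF rank_filtration_Pcarrier[OF lift]] u
          graded_map_graded_lift])
  with lift show "\<exists>v\<in>rank_filtration s n (Suc x). (\<lambda>p. graded_map s x v p - u p) \<in> Nsub s n"
    by blast
qed

theorem proposition4p9:
  fixes s n :: nat
  shows "\<exists>F :: nat \<Rightarrow> ('k::field) vec set.
    F 0 = {\<lambda>_. 0} \<and> F ((s + 1) ^ n) = Pcarrier s n \<and>
    (\<forall>i \<le> (s + 1) ^ n. is_submod s n (F i)) \<and>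
    (\<forall>i. 1 \<le> i \<and> i \<le> (s + 1) ^ n \<longrightarrow> F (i - 1) \<subseteq> F i \<and> iso_to_Q s n (F i) (F (i - 1)))"
proof (intro exI[of _ "rank_filtration s n"] conjI allI impI)
  show "rank_filtration s n 0 = {\<lambda>_. 0 :: 'k}"
    by (rule rank_filtration_0)
  show "rank_filtration s n ((s + 1) ^ n) = (Pcarrier s n :: 'k vec set)"
    by (rule rank_filtration_top)
  show "is_submod s n (rank_filtration s n i :: 'k vec set)" for i
    by (rule is_submod_rank_filtration)
  fix i :: nat
  assume i: "1 \<le> i \<and> i \<le> (s + 1) ^ n"
  show "rank_filtration s n (i - 1) \<subseteq> (rank_filtration s n i :: 'k vec set)"
    by (rule rank_filtration_mono) simp
  from i have "i = Suc (i - 1)" "i - 1 < (s + 1) ^ n"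
    by auto
  then show "iso_to_Q s n (rank_filtration s n i) (rank_filtration s n (i - 1) :: 'k vec set)"
    using iso_to_Q_rank_filtration by metis
qed

end
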